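(* For every integer $l\ge 1$, let $\mathcal{I}_6(l)$ be the index coding instance on $[4l+1]$ with side-information sets $A_{2i-1}=\{2j: j\in[2l]\setminus\{i\}\}\cup\{4l+1\}$ and $A_{2i}=\{2i-1\}$ for $i\in[2l]$, and $A_{4l+1}=\{2i-1: i\in[2l]\}$. Then $$\beta_{\text{R}}(\mathcal{I}_6(l))-\beta_{\text{UMCD}}(\mathcal{I}_6(l))=l-\tfrac{1}{2}.$$
   Context: An index coding instance consists of a positive integer $m$ and sets $A_i\subseteq[m]\setminus\{i\}$, $i\in[m]$; $B_i=[m]\setminus(A_i\cup\{i\})$. For a $0/1$ matrix $\boldsymbol{G}$ with columns indexed by $[m]$, $\boldsymbol{G}_{[k]}^{L}$ is the submatrix of its first $k$ rows and columns in $L$, and $\mathrm{mcm}(\boldsymbol{G})$ is the maximum number of $1$-entries no two in the same row or column (0 if there are no columns). UMCD algorithm: $N=[m]$, $k=0$; while $N\ne\emptyset$: $k\leftarrow k+1$; pick $w\in N$ minimizing $|A_w|$ over $N$ (arbitrary tie-breaking); set row $k$ of $\boldsymbol{G}$ to the indicator vector of $\{w\}\cup A_w$; remove $w$ from $N$; remove from $N$ every $i$ with $\mathrm{mcm}(\boldsymbol{G}_{[k]}^{\{i\}\cup B_i})=\mathrm{mcm}(\boldsymbol{G}_{[k]}^{B_i})+1$. Output $\beta_{\text{UMCD}}=k$ (the value is claimed for the executions of the algorithm). Recursive scheme: set $\beta_{\text{R}}(\{i\})=1$ for all $i$, and for $M\subseteq[m]$ with $|M|\ge2$ define recursively $$\beta_{\text{R}}(M)=\min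 \max_{i\in M}\sum_{j\in[n]:\,M_j\not\subseteq A_i}\gamma_j\,\beta_{\text{R}}(M_j),$$ the minimum being over finite families of nonempty proper subsets $M_1,\dots,M_n\subsetneq M$ and weights $\gamma_j\in[0,1]$ with $\sum_{j:\,i\in M_j}\gamma_j\ge1$ for all $i\in M$. Finally $\beta_{\text{R}}(\mathcal{I})=\beta_{\text{R}}([m])$. *)

theory Defs
  imports Complex_Main
begin

(* Index coding instance on [m] = {1..m}: side-information map A :: nat => nat set. *)

definition B_set :: "nat \<Rightarrow> (nat \<Rightarrow> nat set) \<Rightarrow> nat \<Rightarrow> nat set" where
  "B_set m A i = {1..m} - (A i \<union> {i})"

(* A 0/1 matrix with columns indexed by [m] is represented by the list of its rows,
   each row given as the set of columns carrying a 1.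
   mcm G L = maximum matching size in the submatrix of all rows of G and columns L. *)
definition mcm :: "nat set list \<Rightarrow> nat set \<Rightarrow> nat" where
  "mcm G L = Max {card E | E. E \<subseteq> {(r, c). r < length G \<and> c \<in> L \<and> c \<in> G ! r}
                              \<and> inj_on fst E \<and> inj_on snd E}"

(* One iteration of the UMCD algorithm; state = (N, rows of G so far). *)
definition umcd_step :: "nat \<Rightarrow> (nat \<Rightarrow> nat set) \<Rightarrow> nat set \<times> nat set list \<Rightarrow> nat set \<times> nat set list \<Rightarrow> bool" where
  "umcd_step m A s s' \<longleftrightarrow>
     (\<exists>N G w. s = (N, G) \<and> N \<noteq> {} \<and> w \<in> N \<and> (\<forall>v\<in>N. card (A w) \<le> card (A v)) \<and>
        (let G' = G @ [insert w (A w)]; N1 = N - {w} in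
          s' = (N1 - {i \<in> N1. mcm G' ({i} \<union> B_set m A i) = mcm G' (B_set m A i) + 1}, G')))"

(* G is the final matrix of some terminating execution of UMCD (any tie-breaking);
   beta_UMCD of that execution is length G. *)
definition umcd_run :: "nat \<Rightarrow> (nat \<Rightarrow> nat set) \<Rightarrow> nat set list \<Rightarrow> bool" where
  "umcd_run m A G \<longleftrightarrow> (umcd_step m A)\<^sup>*\<^sup>* ({1..m}, []) ({}, G)"

(* Recursive scheme with fuel n; the intended value is betaR A M = betaR_aux A (card M) M.
   A family M_1..M_n with weights gamma_j is a list of pairs (M_j, gamma_j). *)
primrec betaR_aux :: "(nat \<Rightarrow> nat set) \<Rightarrow> nat \<Rightarrow> nat set \<Rightarrow> real" where
  "betaR_aux A 0 M = 1"
| "betaR_aux A (Suc n) M =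
     (if card M \<le> 1 then 1 else
      Inf { Max ((\<lambda>i. \<Sum>j<length F. if fst (F ! j) \<subseteq> A i then 0
                                   else snd (F ! j) * betaR_aux A n (fst (F ! j))) ` M)
          | F :: (nat set \<times> real) list.
             (\<forall>j<length F. fst (F ! j) \<noteq> {} \<and> fst (F ! j) \<subset> M \<and> 0 \<le> snd (F ! j) \<and> snd (F ! j) \<le> 1)
           \<and> (\<forall>i\<in>M. (\<Sum>j | j < length F \<and> i \<in> fst (F ! j). snd (F ! j)) \<ge> 1) })"

definition betaR :: "(nat \<Rightarrow> nat set) \<Rightarrow> nat set \<Rightarrow> real" where
  "betaR A M = betaR_aux A (card M) M"

definition I6 :: "nat \<Rightarrow> nat \<Rightarrow> nat set" where
  "I6 l x =
     (if x = 4 * l + 1 then {2 * i - 1 | i. i \<in> {1..2 * l}}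
      else if odd x then {2 * j | j. j \<in> {1..2 * l} \<and> j \<noteq> (x + 1) div 2} \<union> {4 * l + 1}
      else {x - 1})"

end

theory Submission
  imports Defs
begin

(*
  UMCD serves the even users first: each of them knows a single message, while every odd user
  knows at least two. The row {2k - 1, 2k} added for the even user 2k never completes a matching
  for another remaining user, so nothing else leaves the queue. Once all 2l even users are served
  only odd users remain, and serving any one of them makes all others decodable. Hence every run
  of UMCD has length 2l + 1.

  The recursive scheme has value exactly 3l + 1/2. For the upper bound, explicit fractional covers
  are built from the four-user blocks {2a - 1, 2a, 2b - 1, 2b}, whose value is at most 3 because
  each of their users knows one of the others. For the lower bound, even users get weight 1 and
  odd users weight 1/2, and one shows by induction along the recursion that the weight of any
  subset of M is at most betaR M. Either the subset contains two even users, whose side information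
  consists of distinct single odd users, and averaging the cost over these even users gives the
  bound; or it contains an acyclic set at least as large as its weight, and the size of an
  acyclic set is a lower bound for the recursion.
*)

section \<open>Fractional covers and the recursive scheme\<close>

definition cover_weight :: "(nat set \<times> real) list \<Rightarrow> nat \<Rightarrow> real" where
  "cover_weight F i = (\<Sum>(N, \<gamma>)\<leftarrow>F. if i \<in> N then \<gamma> else 0)"

definition fractional_cover :: "nat set \<Rightarrow> (nat set \<times> real) list \<Rightarrow> bool" where
  "fractional_cover M F \<longleftrightarrow>
     (\<forall>(N, \<gamma>)\<in>set F. N \<noteq> {} \<and> N \<subset> M \<and> 0 \<le> \<gamma> \<and> \<gamma> \<le> 1) \<and> (\<forall>i\<in>M. 1 \<le> cover_weight F i)"

definition cover_cost :: "(nat \<Rightarrow> nat set) \<Rightarrow> nat \<Rightarrow> (nat set \<times> real) list \<Rightarrow> nat \<Rightarrow> real" where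
  "cover_cost A n F i = (\<Sum>(N, \<gamma>)\<leftarrow>F. if N \<subseteq> A i then 0 else \<gamma> * betaR_aux A n N)"

lemma fractional_cover_member:
  "fractional_cover M F \<Longrightarrow> (N, \<gamma>) \<in> set F \<Longrightarrow> N \<noteq> {} \<and> N \<subset> M \<and> 0 \<le> \<gamma> \<and> \<gamma> \<le> 1"
  unfolding fractional_cover_def by fast

lemma sum_nth_eq_sum_list: "(\<Sum>j<length xs. f (xs ! j)) = (\<Sum>x\<leftarrow>xs. f x)"
  by (simp add: sum_list_sum_nth atLeast0LessThan)

lemma betaR_aux_Suc:
  "betaR_aux A (Suc n) M =
     (if card M \<le> 1 then 1 else Inf {Max (cover_cost A n F ` M) | F. fractional_cover M F})"
proof -
  have cost: "(\<Sum>j<length F. if fst (F ! j) \<subseteq> A i then 0 else snd (F ! j) * betaR_aux A n (fst (F ! j)))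
      = cover_cost A n F i" for F i
    unfolding cover_cost_def by (subst sum_nth_eq_sum_list) (simp add: split_def)
  have weight: "(\<Sum>j | j < length F \<and> i \<in> fst (F ! j). snd (F ! j)) = cover_weight F i" for F i
  proof -
    have "(\<Sum>j | j < length F \<and> i \<in> fst (F ! j). snd (F ! j))
        = (\<Sum>j<length F. if i \<in> fst (F ! j) then snd (F ! j) else 0)"
      by (simp add: sum.If_cases Collect_conj_eq lessThan_def Int_commute)
    then show ?thesis
      unfolding cover_weight_def by (subst (asm) sum_nth_eq_sum_list) (simp add: split_def)
  qed
  have members: "(\<forall>j<length F. fst (F ! j) \<noteq> {} \<and> fst (F ! j) \<subset> M \<and> 0 \<le> snd (F ! j) \<and> snd (F ! j) \<le> 1)
      \<longleftrightarrow> (\<forall>(N, \<gamma>)\<in>set F. N \<noteq> {} \<and> N \<subset> M \<and> 0 \<le> \<gamma> \<and> \<gamma> \<le> 1)" for F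
    by (auto simp: all_set_conv_all_nth case_prod_beta)
  show ?thesis
    unfolding betaR_aux.simps(2) cost weight members fractional_cover_def ..
qed

declare betaR_aux.simps(2) [simp del]

lemma betaR_aux_singleton [simp]: "betaR_aux A n {x} = 1"
  by (cases n) (simp_all add: betaR_aux_Suc)

lemma cover_weight_append [simp]: "cover_weight (F @ G) i = cover_weight F i + cover_weight G i"
  by (simp add: cover_weight_def)

lemma cover_cost_append [simp]: "cover_cost A n (F @ G) i = cover_cost A n F i + cover_cost A n G i"
  by (simp add: cover_cost_def)

lemma fractional_cover_singletons:
  assumes "finite M" "2 \<le> card M"
  shows "fractional_cover M (map (\<lambda>x. ({x}, 1)) (sorted_list_of_set M))"
proof -
  have "{x} \<subset> M" if "x \<in> M" for x
    using that assms by auto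
  moreover have "cover_weight (map (\<lambda>x. ({x}, 1)) (sorted_list_of_set M)) i = 1" if "i \<in> M" for i
    using that assms(1)
    by (simp add: cover_weight_def sum_list_distinct_conv_sum_set sum.If_cases)
  ultimately show ?thesis
    using assms(1) by (auto simp: fractional_cover_def)
qed

lemma cover_cost_singletons:
  assumes "finite M"
  shows "cover_cost A n (map (\<lambda>x. ({x}, 1)) (sorted_list_of_set M)) i = real (card (M - A i))"
  using assms by (simp add: cover_cost_def sum_list_distinct_conv_sum_set sum.If_cases Diff_eq)

lemma le_betaR_aux_Suc:
  assumes "finite M" "2 \<le> card M"
    and "\<And>F. fractional_cover M F \<Longrightarrow> \<exists>i\<in>M. c \<le> cover_cost A n F i"
  shows "c \<le> betaR_aux A (Suc n) M"
proof -
  have "c \<le> Inf {Max (cover_cost A n F ` M) | F. fractional_cover M F}"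
  proof (rule cInf_greatest)
    show "{Max (cover_cost A n F ` M) | F. fractional_cover M F} \<noteq> {}"
      using fractional_cover_singletons[OF assms(1,2)] by blast
  next
    fix x assume "x \<in> {Max (cover_cost A n F ` M) | F. fractional_cover M F}"
    then obtain F where x: "x = Max (cover_cost A n F ` M)" and F: "fractional_cover M F" by blast
    then obtain i where "i \<in> M" "c \<le> cover_cost A n F i" using assms(3) by blast
    then show "c \<le> x" unfolding x using assms(1) by (meson Max_ge finite_imageI image_eqI order_trans)
  qed
  then show ?thesis using assms(2) by (simp add: betaR_aux_Suc)
qed

lemma cover_cost_nonneg:
  assumes "fractional_cover M F" "\<And>N. 0 \<le> betaR_aux A n N"
  shows "0 \<le> cover_cost A n F i"
  unfolding cover_cost_def
proof (intro sum_list_nonneg)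
  fix x assume "x \<in> set (map (\<lambda>(N, \<gamma>). if N \<subseteq> A i then 0 else \<gamma> * betaR_aux A n N) F)"
  then obtain N \<gamma> where "(N, \<gamma>) \<in> set F" "x = (if N \<subseteq> A i then 0 else \<gamma> * betaR_aux A n N)"
    by auto
  then show "0 \<le> x" using fractional_cover_member[OF assms(1)] assms(2) by simp
qed

lemma betaR_aux_nonneg: "0 \<le> betaR_aux A n M"
proof (induction n arbitrary: M)
  case (Suc n)
  have "0 \<le> betaR_aux A (Suc n) M" if M: "finite M" "2 \<le> card M"
  proof (rule le_betaR_aux_Suc[OF M])
    obtain i where "i \<in> M" using M(2) by fastforce
    then show "\<exists>i\<in>M. 0 \<le> cover_cost A n F i" if "fractional_cover M F" for F
      using cover_cost_nonneg[OF that Suc.IH] by blast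
  qed
  then show ?case
    by (cases "finite M \<and> 2 \<le> card M") (auto simp: betaR_aux_Suc)
qed simp

lemma betaR_aux_le_cover_cost:
  assumes "finite M" "2 \<le> card M" "fractional_cover M F"
    and "\<And>i. i \<in> M \<Longrightarrow> cover_cost A n F i \<le> c"
  shows "betaR_aux A (Suc n) M \<le> c"
proof -
  have "M \<noteq> {}" using assms(2) by auto
  have "Inf {Max (cover_cost A n F ` M) | F. fractional_cover M F} \<le> Max (cover_cost A n F ` M)"
  proof (rule cInf_lower)
    show "Max (cover_cost A n F ` M) \<in> {Max (cover_cost A n F ` M) | F. fractional_cover M F}"
      using assms(3) by blast
    have "0 \<le> Max (cover_cost A n G ` M)" if "fractional_cover M G" for G
      using cover_cost_nonneg[OF that betaR_aux_nonneg] \<open>M \<noteq> {}\<close> assms(1)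
      by (metis Max_ge all_not_in_conv finite_imageI image_eqI order_trans)
    then show "bdd_below {Max (cover_cost A n F ` M) | F. fractional_cover M F}"
      by (intro bdd_belowI[of _ 0]) blast
  qed
  also have "\<dots> \<le> c" using assms(1,4) \<open>M \<noteq> {}\<close> by simp
  finally show ?thesis using assms(2) by (simp add: betaR_aux_Suc)
qed

lemma betaR_aux_Suc_le_card_minus_1:
  assumes "finite M" "2 \<le> card M" and "\<And>i. i \<in> M \<Longrightarrow> A i \<inter> M \<noteq> {}"
  shows "betaR_aux A (Suc n) M \<le> real (card M - 1)"
proof (rule betaR_aux_le_cover_cost[OF assms(1,2) fractional_cover_singletons[OF assms(1,2)]])
  fix i assume "i \<in> M"
  then obtain a where "a \<in> M" "a \<in> A i" using assms(3) by blast
  then have "card (M - A i) \<le> card (M - {a})" using assms(1) by (intro card_mono) auto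
  then show "cover_cost A n (map (\<lambda>x. ({x}, 1)) (sorted_list_of_set M)) i \<le> real (card M - 1)"
    using \<open>a \<in> M\<close> assms(1) by (simp add: cover_cost_singletons)
qed

lemma cover_weight_nonneg:
  assumes "\<And>N \<gamma>. (N, \<gamma>) \<in> set F \<Longrightarrow> 0 \<le> \<gamma>"
  shows "0 \<le> cover_weight F i"
  unfolding cover_weight_def by (rule sum_list_nonneg) (auto dest: assms)

lemma cover_weight_Nil [simp]: "cover_weight [] i = 0"
  by (simp add: cover_weight_def)

lemma cover_weight_Cons [simp]:
  "cover_weight ((N, \<gamma>) # F) i = (if i \<in> N then \<gamma> else 0) + cover_weight F i"
  by (simp add: cover_weight_def)

lemma cover_weight_ge_member:
  assumes "\<And>N \<gamma>. (N, \<gamma>) \<in> set F \<Longrightarrow> 0 \<le> \<gamma>" "(N, \<gamma>) \<in> set F" "i \<in> N"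
  shows "\<gamma> \<le> cover_weight F i"
proof -
  obtain xs ys where F: "F = xs @ (N, \<gamma>) # ys" using split_list[OF assms(2)] by blast
  have "0 \<le> cover_weight xs i" "0 \<le> cover_weight ys i"
    using assms(1) by (auto simp: F intro!: cover_weight_nonneg)
  then show ?thesis using assms(3) by (simp add: F)
qed

lemma cover_cost_le:
  assumes "\<And>N \<gamma>. (N, \<gamma>) \<in> set F \<Longrightarrow> 0 \<le> \<gamma> \<and> betaR_aux A n N \<le> b"
  shows "cover_cost A n F i \<le> (\<Sum>(N, \<gamma>)\<leftarrow>F. if N \<subseteq> A i then 0 else \<gamma> * b)"
  unfolding cover_cost_def
proof (rule sum_list_mono, clarify)
  fix N \<gamma> assume "(N, \<gamma>) \<in> set F"
  then show "(if N \<subseteq> A i then 0 else \<gamma> * betaR_aux A n N) \<le> (if N \<subseteq> A i then 0 else \<gamma> * b)"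
    using assms by (simp add: mult_left_mono)
qed

lemma cover_cost_le_weight_sum:
  assumes "\<And>N \<gamma>. (N, \<gamma>) \<in> set F \<Longrightarrow> 0 \<le> \<gamma> \<and> betaR_aux A n N \<le> b"
  shows "cover_cost A n F i \<le> b * (\<Sum>(N, \<gamma>)\<leftarrow>F. \<gamma>)"
proof -
  have "cover_cost A n F i \<le> (\<Sum>(N, \<gamma>)\<leftarrow>F. if N \<subseteq> A i then 0 else \<gamma> * b)"
    by (rule cover_cost_le) (rule assms)
  also have "\<dots> \<le> (\<Sum>(N, \<gamma>)\<leftarrow>F. b * \<gamma>)"
  proof (rule sum_list_mono, clarify)
    fix N \<gamma> assume "(N, \<gamma>) \<in> set F"
    then have "0 \<le> \<gamma>" "0 \<le> b" using assms betaR_aux_nonneg[of A n N] by force+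
    then show "(if N \<subseteq> A i then 0 else \<gamma> * b) \<le> b * \<gamma>" by (simp add: mult.commute)
  qed
  also have "\<dots> = b * (\<Sum>(N, \<gamma>)\<leftarrow>F. \<gamma>)"
    by (induction F) (auto simp: distrib_left)
  finally show ?thesis .
qed

lemma cover_cost_Cons:
  "cover_cost A n ((N, \<gamma>) # F) i = (if N \<subseteq> A i then 0 else \<gamma> * betaR_aux A n N) + cover_cost A n F i"
  by (simp add: cover_cost_def)

lemma cover_cost_le_weight_sum_saving:
  assumes "\<And>N \<gamma>. (N, \<gamma>) \<in> set F \<Longrightarrow> 0 \<le> \<gamma> \<and> betaR_aux A n N \<le> b"
    and "(N\<^sub>0, \<gamma>\<^sub>0) \<in> set F" "N\<^sub>0 \<subseteq> A i"
  shows "cover_cost A n F i \<le> b * ((\<Sum>(N, \<gamma>)\<leftarrow>F. \<gamma>) - \<gamma>\<^sub>0)"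
proof -
  obtain xs ys where F: "F = xs @ (N\<^sub>0, \<gamma>\<^sub>0) # ys" using split_list[OF assms(2)] by blast
  have "cover_cost A n xs i \<le> b * (\<Sum>(N, \<gamma>)\<leftarrow>xs. \<gamma>)" "cover_cost A n ys i \<le> b * (\<Sum>(N, \<gamma>)\<leftarrow>ys. \<gamma>)"
    using assms(1) by (auto simp: F intro!: cover_cost_le_weight_sum)
  then show ?thesis using assms(3) by (simp add: F cover_cost_Cons algebra_simps)
qed

section \<open>Lower bounds for the recursive scheme\<close>

lemma betaR_aux_lower_bound_induct:
  fixes g :: "nat set \<Rightarrow> real"
  assumes base: "\<And>T. T \<subseteq> U \<Longrightarrow> card T \<le> 1 \<Longrightarrow> g T \<le> 1"
    and step: "\<And>n S T F. finite S \<Longrightarrow> S \<subseteq> U \<Longrightarrow> 2 \<le> card S \<Longrightarrow> card S \<le> Suc n \<Longrightarrow> T \<subseteq> S \<Longrightarrow>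
        fractional_cover S F \<Longrightarrow> (\<And>N \<gamma> V. (N, \<gamma>) \<in> set F \<Longrightarrow> V \<subseteq> N \<Longrightarrow> g V \<le> betaR_aux A n N) \<Longrightarrow>
        \<exists>i\<in>S. g T \<le> cover_cost A n F i"
  shows "finite S \<Longrightarrow> S \<subseteq> U \<Longrightarrow> card S \<le> n \<Longrightarrow> T \<subseteq> S \<Longrightarrow> g T \<le> betaR_aux A n S"
proof (induction n arbitrary: S T)
  case 0
  then show ?case using base[of "{}"] by simp
next
  case (Suc n)
  show ?case
  proof (cases "card S \<le> 1")
    case True
    then have "card T \<le> 1" using Suc.prems card_mono le_trans by blast
    then show ?thesis using True base Suc.prems by (simp add: betaR_aux_Suc)
  next
    case False
    show ?thesis
    proof (rule le_betaR_aux_Suc[OF Suc.prems(1)])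
      fix F assume F: "fractional_cover S F"
      have IH: "g V \<le> betaR_aux A n N" if "(N, \<gamma>) \<in> set F" "V \<subseteq> N" for N \<gamma> V
      proof -
        have "N \<subset> S" using fractional_cover_member[OF F that(1)] by blast
        then have "card N < card S" by (rule psubset_card_mono[OF Suc.prems(1)])
        then have "card N \<le> n" using Suc.prems(3) by linarith
        moreover have "finite N" "N \<subseteq> U"
          using \<open>N \<subset> S\<close> Suc.prems(1,2) finite_subset by auto
        ultimately show ?thesis using Suc.IH that(2) by blast
      qed
      have "2 \<le> card S" using False by simp
      from step[OF Suc.prems(1,2) this Suc.prems(3,4) F IH]
      show "\<exists>i\<in>S. g T \<le> cover_cost A n F i" .
    qed (use False in simp)
  qed
qed

lemma sum_mult_cover_weight:
  fixes c :: "nat \<Rightarrow> real"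
  assumes "finite V"
  shows "(\<Sum>x\<in>V. c x * cover_weight F x) = (\<Sum>(N, \<gamma>)\<leftarrow>F. \<gamma> * (\<Sum>x\<in>V \<inter> N. c x))"
proof (induction F)
  case (Cons p F)
  obtain N \<gamma> where p: "p = (N, \<gamma>)" by fastforce
  have "(\<Sum>x\<in>V. c x * (if x \<in> N then \<gamma> else 0)) = (\<Sum>x\<in>V. if x \<in> N then \<gamma> * c x else 0)"
    by (rule sum.cong) auto
  also have "\<dots> = (\<Sum>x\<in>V \<inter> N. \<gamma> * c x)"
    using assms by (simp add: sum.inter_restrict)
  also have "\<dots> = \<gamma> * (\<Sum>x\<in>V \<inter> N. c x)"
    by (simp add: sum_distrib_left)
  finally have "(\<Sum>x\<in>V. c x * (if x \<in> N then \<gamma> else 0)) = \<gamma> * (\<Sum>x\<in>V \<inter> N. c x)" .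
  then show ?case
    using Cons.IH by (simp add: p cover_weight_def distrib_left sum.distrib)
qed (simp add: cover_weight_def)

lemma sum_le_cover_weighted:
  fixes c :: "nat \<Rightarrow> real"
  assumes "finite V" "V \<subseteq> M" "fractional_cover M F" "\<And>x. x \<in> V \<Longrightarrow> 0 \<le> c x"
  shows "(\<Sum>x\<in>V. c x) \<le> (\<Sum>(N, \<gamma>)\<leftarrow>F. \<gamma> * (\<Sum>x\<in>V \<inter> N. c x))"
proof -
  have "c x \<le> c x * cover_weight F x" if "x \<in> V" for x
    using mult_left_mono[of 1 "cover_weight F x" "c x"] that assms(2-4)
    by (auto simp: fractional_cover_def)
  then have "(\<Sum>x\<in>V. c x) \<le> (\<Sum>x\<in>V. c x * cover_weight F x)"
    by (rule sum_mono)
  then show ?thesis using sum_mult_cover_weight[OF assms(1)] by simp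
qed

definition acyclic_set :: "(nat \<Rightarrow> nat set) \<Rightarrow> nat set \<Rightarrow> bool" where
  "acyclic_set A V \<longleftrightarrow> (\<forall>W\<subseteq>V. W \<noteq> {} \<longrightarrow> (\<exists>s\<in>W. A s \<inter> W = {}))"

lemma acyclic_set_subset: "acyclic_set A V \<Longrightarrow> W \<subseteq> V \<Longrightarrow> acyclic_set A W"
  unfolding acyclic_set_def by (meson order_trans)

lemma card_acyclic_le_cover_cost:
  assumes "finite S" "S \<noteq> {}" "fractional_cover S F" "V \<subseteq> S" "acyclic_set A V"
    and IH: "\<And>N \<gamma> W. (N, \<gamma>) \<in> set F \<Longrightarrow> W \<subseteq> N \<Longrightarrow> acyclic_set A W \<Longrightarrow>
      real (card W) \<le> betaR_aux A n N"
  shows "\<exists>i\<in>S. real (card V) \<le> cover_cost A n F i"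
proof (cases "V = {}")
  case True
  then show ?thesis using assms(2) cover_cost_nonneg[OF assms(3) betaR_aux_nonneg] by auto
next
  case False
  then obtain s where s: "s \<in> V" "A s \<inter> V = {}"
    using assms(5) unfolding acyclic_set_def by (meson order_refl)
  have "finite V" using assms(1,4) finite_subset by blast
  have "real (card V) = (\<Sum>x\<in>V. 1)" by simp
  also have "\<dots> \<le> (\<Sum>(N, \<gamma>)\<leftarrow>F. \<gamma> * (\<Sum>x\<in>V \<inter> N. 1))"
    by (rule sum_le_cover_weighted[OF \<open>finite V\<close> assms(4,3)]) simp
  also have "\<dots> \<le> cover_cost A n F s"
    unfolding cover_cost_def
  proof (rule sum_list_mono, clarify)
    fix N \<gamma> assume N: "(N, \<gamma>) \<in> set F"
    have "acyclic_set A (V \<inter> N)" by (rule acyclic_set_subset[OF assms(5)]) blast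
    then have "real (card (V \<inter> N)) \<le> betaR_aux A n N"
      by (rule IH[OF N, rotated]) blast
    moreover have "V \<inter> N = {}" if "N \<subseteq> A s" using that s(2) by blast
    ultimately show "\<gamma> * (\<Sum>x\<in>V \<inter> N. 1) \<le> (if N \<subseteq> A s then 0 else \<gamma> * betaR_aux A n N)"
      using fractional_cover_member[OF assms(3) N] by (auto intro: mult_left_mono)
  qed
  finally show ?thesis using s(1) assms(4) by blast
qed

lemma card_acyclic_le_betaR_aux:
  assumes "finite S" "card S \<le> n" "T \<subseteq> S" "acyclic_set A T"
  shows "real (card T) \<le> betaR_aux A n S"
proof -
  let ?g = "\<lambda>T. if acyclic_set A T then real (card T) else 0"
  have "?g T \<le> betaR_aux A n S"
  proof (rule betaR_aux_lower_bound_induct[where U = UNIV])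
    fix n S T F
    assume S: "finite S" "2 \<le> card S" "T \<subseteq> S" and F: "fractional_cover S F"
      and IH: "\<And>N \<gamma> V. (N, \<gamma>) \<in> set F \<Longrightarrow> V \<subseteq> N \<Longrightarrow> ?g V \<le> betaR_aux A n N"
    have "S \<noteq> {}" using S(2) by auto
    show "\<exists>i\<in>S. ?g T \<le> cover_cost A n F i"
    proof (cases "acyclic_set A T")
      case True
      have "real (card W) \<le> betaR_aux A n N"
        if "(N, \<gamma>) \<in> set F" "W \<subseteq> N" "acyclic_set A W" for N \<gamma> W
        using IH[OF that(1,2)] that(3) by simp
      then show ?thesis using card_acyclic_le_cover_cost[OF S(1) \<open>S \<noteq> {}\<close> F S(3) True] True by simp
    next
      case False
      obtain i where "i \<in> S" using \<open>S \<noteq> {}\<close> by blast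
      then show ?thesis using False cover_cost_nonneg[OF F betaR_aux_nonneg] by auto
    qed
  qed (use assms in auto)
  then show ?thesis using assms(4) by simp
qed

lemma exists_ge_average:
  fixes f :: "'a \<Rightarrow> real"
  assumes "finite E" "E \<noteq> {}" "real (card E) * c \<le> (\<Sum>i\<in>E. f i)"
  shows "\<exists>i\<in>E. c \<le> f i"
proof (rule ccontr)
  assume "\<not> (\<exists>i\<in>E. c \<le> f i)"
  then have "(\<Sum>i\<in>E. f i) < real (card E) * c"
    using assms(1,2) by (intro sum_bounded_above_strict) (auto simp: card_gt_0_iff)
  then show False using assms(3) by simp
qed

lemma sum_cover_cost: "(\<Sum>i\<in>E. cover_cost A n F i)
    = (\<Sum>(N, \<gamma>)\<leftarrow>F. \<Sum>i\<in>E. if N \<subseteq> A i then 0 else \<gamma> * betaR_aux A n N)"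
  unfolding cover_cost_def by (induction F) (auto simp: sum.distrib)

lemma singleton_side_info_member_bound:
  fixes w :: "nat \<Rightarrow> real"
  assumes "N \<noteq> {}" "0 \<le> \<gamma>" "2 \<le> card E" "inj_on A E"
    and singleton: "\<And>i. i \<in> E \<Longrightarrow> \<exists>a. A i = {a} \<and> w a \<le> 1 / 2"
    and w: "\<And>x. 0 \<le> w x"
    and IH: "sum w (T \<inter> N) \<le> betaR_aux A n N"
  shows "real (card E) * (\<gamma> * sum w (T \<inter> N))
    \<le> (\<Sum>i\<in>E. if N \<subseteq> A i then 0 else \<gamma> * betaR_aux A n N)"
proof (cases "\<exists>x\<in>E. N \<subseteq> A x")
  case True
  \<comment> \<open>Then N = {a} is the side information of exactly one x in E, and the weight of a is at most
    1/2, so the other card E - 1 users of E pay for N.\<close>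
  define k where "k = real (card E)"
  have "finite E" "2 \<le> k" using assms(3) card.infinite by (force simp: k_def)+
  obtain x a where x: "x \<in> E" "N \<subseteq> A x" "A x = {a}" "w a \<le> 1 / 2" using True singleton by blast
  have N_eq: "N = {a}" using assms(1) x(2,3) by auto
  have "N \<subseteq> A i \<longleftrightarrow> i = x" if "i \<in> E" for i
    using that x singleton[OF that] inj_onD[OF assms(4) _ that x(1)] by (auto simp: N_eq)
  then have "(\<Sum>i\<in>E. if N \<subseteq> A i then 0 else \<gamma> * betaR_aux A n N) = (\<Sum>i\<in>E. if i = x then 0 else \<gamma>)"
    by (intro sum.cong) (auto simp: N_eq)
  also have "\<dots> = (k - 1) * \<gamma>"
    using \<open>finite E\<close> x(1) assms(3) by (simp add: sum.remove[OF \<open>finite E\<close> x(1)] k_def of_nat_diff)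
  finally have rhs: "(\<Sum>i\<in>E. if N \<subseteq> A i then 0 else \<gamma> * betaR_aux A n N) = (k - 1) * \<gamma>" .
  have "sum w (T \<inter> N) \<le> 1 / 2"
    using x(4) w by (cases "a \<in> T") (auto simp: N_eq Int_insert_right)
  then have "k * (\<gamma> * sum w (T \<inter> N)) \<le> k * (\<gamma> * (1 / 2))"
    using assms(2) \<open>2 \<le> k\<close> by (intro mult_left_mono) auto
  also have "\<dots> \<le> (k - 1) * \<gamma>"
    using mult_left_mono[OF \<open>2 \<le> k\<close> assms(2)] by (simp add: algebra_simps)
  finally show ?thesis using rhs k_def by simp
next
  case False
  then show ?thesis using IH assms(2) by (auto intro!: mult_left_mono)
qed

lemma weight_le_cover_cost_singleton_side_info:
  fixes w :: "nat \<Rightarrow> real"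
  assumes "fractional_cover S F" "T \<subseteq> S" "finite T" "E \<subseteq> T" "2 \<le> card E" "inj_on A E"
    and singleton: "\<And>i. i \<in> E \<Longrightarrow> \<exists>a. A i = {a} \<and> w a \<le> 1 / 2"
    and w: "\<And>x. 0 \<le> w x"
    and IH: "\<And>N \<gamma>. (N, \<gamma>) \<in> set F \<Longrightarrow> sum w (T \<inter> N) \<le> betaR_aux A n N"
  shows "\<exists>i\<in>S. sum w T \<le> cover_cost A n F i"
proof -
  define k where "k = real (card E)"
  have "finite E" "E \<noteq> {}" using assms(5) card.infinite by force+
  have "k * sum w T \<le> k * (\<Sum>(N, \<gamma>)\<leftarrow>F. \<gamma> * sum w (T \<inter> N))"
    using sum_le_cover_weighted[OF assms(3,2,1) w] k_def by (intro mult_left_mono) auto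
  also have "\<dots> = (\<Sum>(N, \<gamma>)\<leftarrow>F. k * (\<gamma> * sum w (T \<inter> N)))"
    by (simp add: sum_list_const_mult[symmetric] split_def)
  also have "\<dots> \<le> (\<Sum>i\<in>E. cover_cost A n F i)"
    unfolding sum_cover_cost k_def
    using singleton_side_info_member_bound[OF _ _ assms(5,6) singleton w IH]
      fractional_cover_member[OF assms(1)]
    by (intro sum_list_mono) auto
  finally obtain i where "i \<in> E" "sum w T \<le> cover_cost A n F i"
    using exists_ge_average[OF \<open>finite E\<close> \<open>E \<noteq> {}\<close>] k_def by blast
  then show ?thesis using assms(2,4) by blast
qed

lemma weight_le_betaR_aux:
  fixes w :: "nat \<Rightarrow> real"
  assumes w: "\<And>x. 0 \<le> w x" "\<And>x. w x \<le> 1"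
    and dichotomy: "\<And>T. T \<subseteq> U \<Longrightarrow> finite T \<Longrightarrow>
        (\<exists>E\<subseteq>T. 2 \<le> card E \<and> inj_on A E \<and> (\<forall>i\<in>E. \<exists>a. A i = {a} \<and> w a \<le> 1 / 2))
      \<or> (\<exists>V\<subseteq>T. acyclic_set A V \<and> sum w T \<le> real (card V))"
  shows "finite S \<Longrightarrow> S \<subseteq> U \<Longrightarrow> card S \<le> n \<Longrightarrow> T \<subseteq> S \<Longrightarrow> sum w T \<le> betaR_aux A n S"
proof (rule betaR_aux_lower_bound_induct[where g = "sum w"])
  fix T :: "nat set" assume "card T \<le> 1"
  have "sum w T \<le> real (card T) * 1" by (rule sum_bounded_above) (rule w(2))
  then show "sum w T \<le> 1" using \<open>card T \<le> 1\<close> by simp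
next
  fix n S T F
  assume S: "finite S" "S \<subseteq> U" "2 \<le> card S" "card S \<le> Suc n" "T \<subseteq> S"
    and F: "fractional_cover S F"
    and IH: "\<And>N \<gamma> V. (N, \<gamma>) \<in> set F \<Longrightarrow> V \<subseteq> N \<Longrightarrow> sum w V \<le> betaR_aux A n N"
  have "finite T" "T \<subseteq> U" using S(1,2,5) finite_subset by auto
  from dichotomy[OF this(2,1)] consider
      E where "E \<subseteq> T" "2 \<le> card E" "inj_on A E" "\<forall>i\<in>E. \<exists>a. A i = {a} \<and> w a \<le> 1 / 2"
    | V where "V \<subseteq> T" "acyclic_set A V" "sum w T \<le> real (card V)"
    by (elim disjE exE conjE) simp_all
  then show "\<exists>i\<in>S. sum w T \<le> cover_cost A n F i"
  proof cases
    case 1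
    show ?thesis
    proof (rule weight_le_cover_cost_singleton_side_info[where w = w, OF F S(5) \<open>finite T\<close> 1(1-3)])
      show "\<exists>a. A i = {a} \<and> w a \<le> 1 / 2" if "i \<in> E" for i using 1(4) that by blast
      show "sum w (T \<inter> N) \<le> betaR_aux A n N" if "(N, \<gamma>) \<in> set F" for N \<gamma>
        using IH[OF that] by blast
    qed (rule w(1))
  next
    case 2
    have "real (card W) \<le> betaR_aux A n N"
      if "(N, \<gamma>) \<in> set F" "W \<subseteq> N" "acyclic_set A W" for N \<gamma> W
    proof (rule card_acyclic_le_betaR_aux[OF _ _ that(2,3)])
      have "N \<subset> S" using fractional_cover_member[OF F that(1)] by blast
      then show "finite N" using S(1) finite_subset by (meson psubset_imp_subset)
      show "card N \<le> n" using psubset_card_mono[OF S(1) \<open>N \<subset> S\<close>] S(4) by linarith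
    qed
    moreover have "S \<noteq> {}" "V \<subseteq> S" using S(3,5) 2(1) by auto
    ultimately obtain i where "i \<in> S" "real (card V) \<le> cover_cost A n F i"
      using card_acyclic_le_cover_cost[OF S(1) _ F _ 2(2)] by blast
    then show ?thesis using 2(3) by (meson order_trans)
  qed
qed

section \<open>Column matchings and UMCD steps\<close>

definition matching :: "nat set list \<Rightarrow> nat set \<Rightarrow> (nat \<times> nat) set \<Rightarrow> bool" where
  "matching G L E \<longleftrightarrow>
     E \<subseteq> {(r, c). r < length G \<and> c \<in> L \<and> c \<in> G ! r} \<and> inj_on fst E \<and> inj_on snd E"

lemma mcm_eq_Max_matching: "mcm G L = Max (card ` {E. matching G L E})"
  unfolding mcm_def matching_def by (simp add: setcompr_eq_image)

lemma finite_matching_sizes: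
  assumes "finite L"
  shows "finite (card ` {E. matching G L E})"
proof -
  have "{E. matching G L E} \<subseteq> Pow ({..<length G} \<times> L)"
    by (auto simp: matching_def)
  moreover have "finite (Pow ({..<length G} \<times> L))" using assms by simp
  ultimately show ?thesis using finite_subset by blast
qed

lemma matching_empty: "matching G L {}"
  by (simp add: matching_def)

lemma card_matching_le_mcm: "finite L \<Longrightarrow> matching G L E \<Longrightarrow> card E \<le> mcm G L"
  unfolding mcm_eq_Max_matching by (intro Max_ge finite_matching_sizes) auto

lemma mcm_attained:
  assumes "finite L"
  obtains E where "matching G L E" "card E = mcm G L"
proof -
  have "mcm G L \<in> card ` {E. matching G L E}"
    unfolding mcm_eq_Max_matching using matching_empty
    by (intro Max_in finite_matching_sizes assms) auto
  then obtain E where "matching G L E" "mcm G L = card E" by blast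
  then show ?thesis using that by simp
qed

lemma mcm_le_length:
  assumes "finite L"
  shows "mcm G L \<le> length G"
proof -
  obtain E where E: "matching G L E" "card E = mcm G L" using mcm_attained[OF assms] .
  have "card E = card (fst ` E)" using E(1) by (simp add: matching_def card_image)
  also have "\<dots> \<le> card {..<length G}" using E(1) by (intro card_mono) (auto simp: matching_def)
  finally show ?thesis using E(2) by simp
qed

lemma mcm_le_card:
  assumes "finite L"
  shows "mcm G L \<le> card L"
proof -
  obtain E where E: "matching G L E" "card E = mcm G L" using mcm_attained[OF assms] .
  have "card E = card (snd ` E)" using E(1) by (simp add: matching_def card_image)
  also have "\<dots> \<le> card L" using E(1) assms by (intro card_mono) (auto simp: matching_def)
  finally show ?thesis using E(2) by simp
qed

lemma mcm_insert_unused_column: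
  assumes "\<And>r. r < length G \<Longrightarrow> c \<notin> G ! r"
  shows "mcm G (insert c L) = mcm G L"
proof -
  have "{(r, c'). r < length G \<and> c' \<in> insert c L \<and> c' \<in> G ! r}
      = {(r, c'). r < length G \<and> c' \<in> L \<and> c' \<in> G ! r}"
    using assms by auto
  then show ?thesis unfolding mcm_def by simp
qed

lemma length_le_mcm_transversal:
  assumes "distinct ks" "set ks \<subseteq> K" "inj_on f K" "\<And>k. k \<in> K \<Longrightarrow> f k \<in> L \<inter> R k" "finite L"
  shows "length ks \<le> mcm (map R ks @ X) L"
proof -
  define E where "E = (\<lambda>r. (r, f (ks ! r))) ` {..<length ks}"
  have "card E = length ks" unfolding E_def by (subst card_image) (auto simp: inj_on_def)
  moreover have "matching (map R ks @ X) L E"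
    unfolding matching_def
  proof (intro conjI)
    have "f (ks ! r) \<in> L \<inter> R (ks ! r)" if "r < length ks" for r
      using that assms(2) by (intro assms(4)) auto
    then show "E \<subseteq> {(r, c). r < length (map R ks @ X) \<and> c \<in> L \<and> c \<in> (map R ks @ X) ! r}"
      by (auto simp: E_def nth_append)
    show "inj_on fst E" by (auto simp: E_def inj_on_def)
    have "ks ! r = ks ! r'" if "r < length ks" "r' < length ks" "f (ks ! r) = f (ks ! r')" for r r'
      using that assms(2) inj_onD[OF assms(3)] by (meson nth_mem subsetD)
    then show "inj_on snd E"
      using assms(1) by (auto simp: E_def inj_on_def nth_eq_iff_index_eq)
  qed
  ultimately show ?thesis using card_matching_le_mcm[OF assms(5)] by metis
qed

lemma mcm_append_row:
  assumes "finite L" "c \<in> L" "c \<in> R"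
  shows "mcm G (L - {c}) + 1 \<le> mcm (G @ [R]) L"
proof -
  obtain E where E: "matching G (L - {c}) E" "card E = mcm G (L - {c})"
    using mcm_attained[of "L - {c}"] assms(1) by blast
  have fst_E: "r < length G" and snd_E: "c' \<noteq> c" if "(r, c') \<in> E" for r c'
    using that E(1) by (auto simp: matching_def)
  have "matching (G @ [R]) L (insert (length G, c) E)"
    unfolding matching_def
  proof (intro conjI)
    show "insert (length G, c) E \<subseteq> {(r, c). r < length (G @ [R]) \<and> c \<in> L \<and> c \<in> (G @ [R]) ! r}"
      using E(1) assms(2,3) by (auto simp: matching_def nth_append)
    show "inj_on fst (insert (length G, c) E)" "inj_on snd (insert (length G, c) E)"
      using E(1) fst_E snd_E by (force simp: matching_def inj_on_insert intro: inj_on_subset)+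
  qed
  moreover have "card (insert (length G, c) E) = card E + 1"
  proof -
    have "E \<subseteq> {..<length G} \<times> L" using E(1) by (auto simp: matching_def)
    then have "finite E" using assms(1) finite_subset by blast
    then show ?thesis using fst_E by (subst card_insert_disjoint) auto
  qed
  ultimately show ?thesis using card_matching_le_mcm[OF assms(1)] E(2) by metis
qed

lemma finite_B_set [simp]: "finite (B_set m A i)"
  by (simp add: B_set_def)

definition decodable :: "nat \<Rightarrow> (nat \<Rightarrow> nat set) \<Rightarrow> nat set list \<Rightarrow> nat \<Rightarrow> bool" where
  "decodable m A G i \<longleftrightarrow> mcm G ({i} \<union> B_set m A i) = mcm G (B_set m A i) + 1"

lemma umcd_step_iff:
  "umcd_step m A (N, G) s' \<longleftrightarrow>
    (\<exists>w\<in>N. (\<forall>v\<in>N. card (A w) \<le> card (A v)) \<and>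
      s' = (N - {w} - {i \<in> N - {w}. decodable m A (G @ [insert w (A w)]) i}, G @ [insert w (A w)]))"
  unfolding umcd_step_def Let_def decodable_def by blast

lemma umcd_step_exists:
  assumes "w \<in> fst s"
  shows "\<exists>s'. umcd_step m A s s'"
proof -
  obtain N G where s: "s = (N, G)" by fastforce
  obtain w' where "w' \<in> N" "\<forall>v. v \<in> N \<longrightarrow> card (A w') \<le> card (A v)"
    using ex_has_least_nat[of "\<lambda>v. v \<in> N" w "\<lambda>v. card (A v)"] assms s by auto
  then show ?thesis unfolding s umcd_step_iff by blast
qed

lemma distinct_subset_interval_cases:
  assumes "distinct ks" "set ks \<subseteq> {1..n}"
  shows "length ks < n \<or> set ks = {1..n}"
proof -
  have "length ks = card (set ks)" using assms(1) by (simp add: distinct_card)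
  moreover have "card (set ks) \<le> n" using card_mono[OF _ assms(2)] by simp
  moreover have "set ks = {1..n}" if "card (set ks) = n"
    using card_subset_eq[OF _ assms(2)] that by simp
  ultimately show ?thesis by linarith
qed

section \<open>The instance I6 and its weighted lower bound\<close>

lemma I6_even: "even x \<Longrightarrow> I6 l x = {x - 1}"
  unfolding I6_def by presburger

lemma I6_top: "I6 l (4 * l + 1) = {y. odd y \<and> y < 4 * l}"
proof -
  have "y \<in> {2 * i - 1 | i. i \<in> {1..2 * l}} \<longleftrightarrow> odd y \<and> y < 4 * l" for y
  proof
    assume "odd y \<and> y < 4 * l"
    then have "y = 2 * ((y + 1) div 2) - 1" "(y + 1) div 2 \<in> {1..2 * l}"
      by (simp_all only: atLeastAtMost_iff) presburger+
    then show "y \<in> {2 * i - 1 | i. i \<in> {1..2 * l}}" by blast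
  qed auto
  then show ?thesis by (auto simp: I6_def)
qed

lemma I6_odd:
  assumes "odd x" "x \<noteq> 4 * l + 1"
  shows "I6 l x = {y. even y \<and> 0 < y \<and> y \<le> 4 * l \<and> y \<noteq> x + 1} \<union> {4 * l + 1}"
proof -
  have "y \<in> {2 * j | j. j \<in> {1..2 * l} \<and> j \<noteq> (x + 1) div 2}
      \<longleftrightarrow> even y \<and> 0 < y \<and> y \<le> 4 * l \<and> y \<noteq> x + 1" for y
  proof
    assume "y \<in> {2 * j | j. j \<in> {1..2 * l} \<and> j \<noteq> (x + 1) div 2}"
    then obtain j where "y = 2 * j" "1 \<le> j" "j \<le> 2 * l" "j \<noteq> (x + 1) div 2" by auto
    with assms(1) show "even y \<and> 0 < y \<and> y \<le> 4 * l \<and> y \<noteq> x + 1" by presburger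
  next
    assume "even y \<and> 0 < y \<and> y \<le> 4 * l \<and> y \<noteq> x + 1"
    with assms(1) have "y = 2 * (y div 2)" "y div 2 \<in> {1..2 * l}" "y div 2 \<noteq> (x + 1) div 2"
      by (simp_all only: atLeastAtMost_iff) presburger+
    then show "y \<in> {2 * j | j. j \<in> {1..2 * l} \<and> j \<noteq> (x + 1) div 2}" by blast
  qed
  then show ?thesis using assms by (auto simp: I6_def)
qed

lemma finite_I6: "finite (I6 l x)"
  unfolding I6_def by auto

lemma card_I6_odd_ge_2:
  assumes "1 \<le> l" "odd w" "w \<in> {1..4 * l + 1}"
  shows "2 \<le> card (I6 l w)"
proof -
  obtain a b where "a \<noteq> b" "{a, b} \<subseteq> I6 l w"
  proof (cases "w = 4 * l + 1")
    case True
    have "{1, 3} \<subseteq> I6 l w" using assms(1) unfolding True I6_top by auto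
    then show ?thesis by (rule that[rotated]) simp
  next
    case False
    define e :: nat where "e = (if w = 1 then 4 else 2)"
    have "e \<noteq> 4 * l + 1" "e \<noteq> w + 1" "e \<le> 4 * l" using assms unfolding e_def by auto
    then have "{e, 4 * l + 1} \<subseteq> I6 l w"
      unfolding I6_odd[OF assms(2) False] by (simp add: e_def)
    then show ?thesis by (rule that[rotated]) fact
  qed
  then have "card {a, b} \<le> card (I6 l w)" by (intro card_mono finite_I6)
  then show ?thesis using \<open>a \<noteq> b\<close> by simp
qed

lemma acyclic_I6_unique_even:
  assumes "T \<subseteq> {1..4 * l + 1}" "4 * l + 1 \<notin> T"
    and unique: "\<And>e e'. e \<in> T \<Longrightarrow> e' \<in> T \<Longrightarrow> even e \<Longrightarrow> even e' \<Longrightarrow> e = e'"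
  shows "acyclic_set (I6 l) T"
  unfolding acyclic_set_def
proof (intro allI impI)
  fix W assume W: "W \<subseteq> T" "W \<noteq> {}"
  show "\<exists>s\<in>W. I6 l s \<inter> W = {}"
  proof (cases "\<exists>e\<in>W. even e")
    case True
    then obtain e where e: "e \<in> W" "even e" by blast
    show ?thesis
    proof (cases "e - 1 \<in> W")
      case True
      have "1 \<le> e" using e(1) W(1) assms(1) by auto
      then have "odd (e - 1)" using e(2) by presburger
      have "e - 1 \<noteq> 4 * l + 1" using True W(1) assms(2) by (metis subsetD)
      have "y \<notin> W" if "y \<in> I6 l (e - 1)" for y
      proof
        assume "y \<in> W"
        have "y = 4 * l + 1 \<or> (even y \<and> y \<noteq> e)"
          using that \<open>1 \<le> e\<close> unfolding I6_odd[OF \<open>odd (e - 1)\<close> \<open>e - 1 \<noteq> 4 * l + 1\<close>] by auto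
        then show False using \<open>y \<in> W\<close> e W(1) assms(2) unique by blast
      qed
      then show ?thesis using True by blast
    next
      case False
      with e show ?thesis by (intro bexI[of _ e]) (auto simp: I6_even)
    qed
  next
    case False
    obtain s where "s \<in> W" using W(2) by blast
    have "odd s" "s \<noteq> 4 * l + 1" using False \<open>s \<in> W\<close> W(1) assms(2) by auto
    have "y \<notin> W" if "y \<in> I6 l s" for y
    proof
      assume "y \<in> W"
      from that have "even y \<or> y = 4 * l + 1"
        unfolding I6_odd[OF \<open>odd s\<close> \<open>s \<noteq> 4 * l + 1\<close>] by auto
      then show False using \<open>y \<in> W\<close> False W(1) assms(2) by auto
    qed
    then show ?thesis using \<open>s \<in> W\<close> by blast
  qed
qed

lemma acyclic_I6_no_odd:
  assumes "T \<subseteq> {1..4 * l + 1}" "\<And>x. x \<in> T \<Longrightarrow> odd x \<Longrightarrow> x = 4 * l + 1"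
  shows "acyclic_set (I6 l) T"
  unfolding acyclic_set_def
proof (intro allI impI)
  fix W assume W: "W \<subseteq> T" "W \<noteq> {}"
  show "\<exists>s\<in>W. I6 l s \<inter> W = {}"
  proof (cases "4 * l + 1 \<in> W")
    case True
    have "y \<notin> W" if "y \<in> I6 l (4 * l + 1)" for y
    proof
      assume "y \<in> W"
      moreover from that have "odd y" "y < 4 * l" unfolding I6_top by simp_all
      ultimately show False using W(1) assms(2) by fastforce
    qed
    then have "I6 l (4 * l + 1) \<inter> W = {}" by blast
    then show ?thesis using True by blast
  next
    case False
    obtain s where s: "s \<in> W" using W(2) by blast
    then have "even s" "1 \<le> s" "s \<le> 4 * l + 1" using False W(1) assms by auto
    have "s - 1 \<notin> W"
    proof
      assume "s - 1 \<in> W"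
      moreover have "odd (s - 1)" using \<open>even s\<close> \<open>1 \<le> s\<close> by presburger
      ultimately have "s - 1 = 4 * l + 1" using W(1) assms(2) by blast
      then show False using \<open>s \<le> 4 * l + 1\<close> by linarith
    qed
    then show ?thesis using s \<open>even s\<close> by (intro bexI[of _ s]) (auto simp: I6_even)
  qed
qed

definition parity_weight :: "nat \<Rightarrow> real" where
  "parity_weight x = (if even x then 1 else 1 / 2)"

lemma parity_weight_bounds: "0 \<le> parity_weight x" "parity_weight x \<le> 1"
  by (simp_all add: parity_weight_def)

lemma sum_parity_weight_le_card: "sum parity_weight T \<le> real (card T)"
  using sum_bounded_above[of T parity_weight 1] parity_weight_bounds(2) by simp

lemma sum_parity_weight_users: "sum parity_weight {1..4 * l + 1} = 3 * real l + 1 / 2"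
proof (induction l)
  case (Suc l)
  have "{1..4 * Suc l + 1} = {1..4 * l + 1} \<union> {4 * l + 2, 4 * l + 3, 4 * l + 4, 4 * l + 5}" by auto
  then have "sum parity_weight {1..4 * Suc l + 1} = sum parity_weight {1..4 * l + 1}
      + parity_weight (4 * l + 2) + parity_weight (4 * l + 3)
      + parity_weight (4 * l + 4) + parity_weight (4 * l + 5)"
    by (simp add: sum.union_disjoint)
  then show ?case using Suc.IH by (simp add: parity_weight_def)
qed (simp add: parity_weight_def)

lemma I6_even_users_side_info:
  assumes "E \<subseteq> {1..4 * l + 1}" "\<And>x. x \<in> E \<Longrightarrow> even x"
  shows "inj_on (I6 l) E" "\<And>i. i \<in> E \<Longrightarrow> \<exists>a. I6 l i = {a} \<and> parity_weight a \<le> 1 / 2"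
proof -
  have pos: "1 \<le> x" if "x \<in> E" for x using that assms(1) by auto
  show "inj_on (I6 l) E"
  proof (rule inj_onI)
    fix x y assume "x \<in> E" "y \<in> E" "I6 l x = I6 l y"
    then have "x - 1 = y - 1" by (simp add: I6_even assms(2))
    moreover have "1 \<le> x" "1 \<le> y" using pos \<open>x \<in> E\<close> \<open>y \<in> E\<close> by auto
    ultimately show "x = y" by linarith
  qed
  fix i assume "i \<in> E"
  then have "odd (i - 1)" using pos[of i] assms(2) by auto
  then show "\<exists>a. I6 l i = {a} \<and> parity_weight a \<le> 1 / 2"
    using \<open>i \<in> E\<close> assms(2) by (simp add: I6_even parity_weight_def)
qed

lemma I6_acyclic_subset_ge_weight:
  assumes "T \<subseteq> {1..4 * l + 1}" "finite T"
    and unique: "\<And>e e'. e \<in> T \<Longrightarrow> e' \<in> T \<Longrightarrow> even e \<Longrightarrow> even e' \<Longrightarrow> e = e'"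
  shows "\<exists>V\<subseteq>T. acyclic_set (I6 l) V \<and> sum parity_weight T \<le> real (card V)"
proof (cases "4 * l + 1 \<in> T \<and> (\<exists>u\<in>T. odd u \<and> u \<noteq> 4 * l + 1)")
  case True
  then obtain u where top: "4 * l + 1 \<in> T" and u: "u \<in> T" "odd u" "u \<noteq> 4 * l + 1" by blast
  have "sum parity_weight T
      = parity_weight (4 * l + 1) + parity_weight u + sum parity_weight (T - {4 * l + 1} - {u})"
    using top u assms(2) by (simp add: sum.remove)
  also have "\<dots> \<le> 1 + real (card (T - {4 * l + 1} - {u}))"
    using u(2) sum_parity_weight_le_card by (simp add: parity_weight_def)
  also have "\<dots> = real (card (T - {4 * l + 1}))"
    using card.remove[of "T - {4 * l + 1}" u] u assms(2) by simp
  finally have "sum parity_weight T \<le> real (card (T - {4 * l + 1}))" .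
  moreover have "acyclic_set (I6 l) (T - {4 * l + 1})"
    by (rule acyclic_I6_unique_even) (use assms(1) unique in auto)
  ultimately show ?thesis by (intro exI[of _ "T - {4 * l + 1}"]) auto
next
  case False
  then have "acyclic_set (I6 l) T"
    using acyclic_I6_unique_even[OF assms(1) _ unique] acyclic_I6_no_odd[OF assms(1)] by blast
  then show ?thesis by (intro exI[of _ T]) (simp add: sum_parity_weight_le_card)
qed

lemma I6_weight_dichotomy:
  assumes "T \<subseteq> {1..4 * l + 1}" "finite T"
  shows "(\<exists>E\<subseteq>T. 2 \<le> card E \<and> inj_on (I6 l) E \<and> (\<forall>i\<in>E. \<exists>a. I6 l i = {a} \<and> parity_weight a \<le> 1 / 2))
    \<or> (\<exists>V\<subseteq>T. acyclic_set (I6 l) V \<and> sum parity_weight T \<le> real (card V))"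
proof (cases "2 \<le> card {x \<in> T. even x}")
  case True
  have "{x \<in> T. even x} \<subseteq> {1..4 * l + 1}" using assms(1) by auto
  from I6_even_users_side_info[OF this] True show ?thesis
    by (intro disjI1 exI[of _ "{x \<in> T. even x}"]) auto
next
  case False
  then have "card {x \<in> T. even x} \<le> Suc 0" by simp
  then have "e = e'" if "e \<in> T" "e' \<in> T" "even e" "even e'" for e e'
    using that card_le_Suc0_iff_eq[of "{x \<in> T. even x}"] assms(2) by simp
  then show ?thesis using I6_acyclic_subset_ge_weight[OF assms] by blast
qed

lemma betaR_I6_lower_bound: "3 * real l + 1 / 2 \<le> betaR (I6 l) {1..4 * l + 1}"
  unfolding betaR_def sum_parity_weight_users[symmetric]
  using I6_weight_dichotomy parity_weight_bounds
  by (intro weight_le_betaR_aux[where U = "{1..4 * l + 1}"]) auto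

section \<open>Fractional covers of I6\<close>

definition pair_users :: "nat \<Rightarrow> nat \<Rightarrow> nat set" where
  "pair_users a b = {2 * a - 1, 2 * a, 2 * b - 1, 2 * b}"

lemma pair_users_nonempty [simp]: "pair_users a b \<noteq> {}"
  by (simp add: pair_users_def)

lemma pair_users_psubset:
  assumes "a \<in> {1..2 * l}" "b \<in> {1..2 * l}"
  shows "pair_users a b \<subset> {1..4 * l + 1}"
proof -
  have "pair_users a b \<subseteq> {1..4 * l}" using assms by (auto simp: pair_users_def)
  then show ?thesis by fastforce
qed

lemma betaR_aux_pair_users_le:
  assumes "a \<noteq> b" "a \<in> {1..2 * l}" "b \<in> {1..2 * l}"
  shows "betaR_aux (I6 l) (Suc n) (pair_users a b) \<le> 3"
proof -
  have "2 * a - 1 \<noteq> 2 * a" "2 * a - 1 \<noteq> 2 * b - 1" "2 * a - 1 \<noteq> 2 * b"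
    "2 * a \<noteq> 2 * b - 1" "2 * a \<noteq> 2 * b" "2 * b - 1 \<noteq> 2 * b"
    using assms by auto
  then have card: "card (pair_users a b) = 4" by (simp add: pair_users_def)
  have "I6 l i \<inter> pair_users a b \<noteq> {}" if "i \<in> pair_users a b" for i
  proof -
    have "2 * b \<in> I6 l (2 * a - 1)" "2 * a \<in> I6 l (2 * b - 1)"
      using assms by (auto simp: I6_odd)
    moreover have "2 * a - 1 \<in> I6 l (2 * a)" "2 * b - 1 \<in> I6 l (2 * b)"
      by (simp_all add: I6_even)
    ultimately show ?thesis using that by (auto simp: pair_users_def)
  qed
  then show ?thesis
    using betaR_aux_Suc_le_card_minus_1[of "pair_users a b" "I6 l" n] card
    by (simp add: pair_users_def)
qed

lemma betaR_aux_odd_top_le: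
  assumes "odd u" "u < 4 * l"
  shows "betaR_aux (I6 l) (Suc n) {u, 4 * l + 1} \<le> 1"
proof -
  have "4 * l + 1 \<in> I6 l u" using assms by (simp add: I6_odd)
  moreover have "u \<in> I6 l (4 * l + 1)" unfolding I6_top using assms by simp
  ultimately show ?thesis
    using betaR_aux_Suc_le_card_minus_1[of "{u, 4 * l + 1}" "I6 l" n] assms by auto
qed

definition low_blocks :: "(nat set \<times> real) list" where
  "low_blocks = [(pair_users 1 2, 1 / 2), (pair_users 1 3, 1 / 2), (pair_users 2 3, 1 / 2)]"

definition middle_blocks :: "nat \<Rightarrow> (nat set \<times> real) list" where
  "middle_blocks l = map (\<lambda>j. (pair_users (2 * j) (2 * j + 1), 1)) [2..<l]"

definition top_blocks :: "nat \<Rightarrow> (nat set \<times> real) list" where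
  "top_blocks l = [({4 * l}, 1), ({4 * l - 1, 4 * l + 1}, 1)]"

(* With pair k = {2k - 1, 2k}: pairs 1, 2, 3 are covered twice by blocks of weight 1/2 and pairs
   4, ..., 2l - 1 once by disjoint blocks, each block of value at most 3; pair 2l and the top user
   4l + 1 are covered by two sets of value 1. So the cost is at most 9/2 + 3 (l - 2) + 2 = 3l + 1/2
   at every user. *)
definition I6_cover :: "nat \<Rightarrow> (nat set \<times> real) list" where
  "I6_cover l = low_blocks @ middle_blocks l @ top_blocks l"

lemma I6_cover_member:
  assumes "2 \<le> l" "(N, \<gamma>) \<in> set (I6_cover l)"
  shows "N \<noteq> {} \<and> N \<subset> {1..4 * l + 1} \<and> 0 \<le> \<gamma> \<and> \<gamma> \<le> 1"
proof -
  have proper: "N \<subset> {1..4 * l + 1}" if "N \<subseteq> {1..4 * l + 1}" "1 \<notin> N" for N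
  proof -
    have "1 \<in> {1..4 * l + 1}" by simp
    then show ?thesis using that by blast
  qed
  from assms(2) consider
      a b where "(N, \<gamma>) = (pair_users a b, 1 / 2)" "a \<in> {1..3}" "b \<in> {1..3}"
    | j where "(N, \<gamma>) = (pair_users (2 * j) (2 * j + 1), 1)" "2 \<le> j" "j < l"
    | "(N, \<gamma>) = ({4 * l}, 1)" | "(N, \<gamma>) = ({4 * l - 1, 4 * l + 1}, 1)"
    unfolding I6_cover_def low_blocks_def middle_blocks_def top_blocks_def by fastforce
  then show ?thesis
  proof cases
    case 1
    then show ?thesis using pair_users_psubset[of a l b] assms(1) by simp
  next
    case 2
    then show ?thesis using pair_users_psubset[of "2 * j" l "2 * j + 1"] by simp
  next
    case 3
    have "{4 * l} \<subset> {1..4 * l + 1}" using assms(1) by (intro proper) auto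
    then show ?thesis using 3 by simp
  next
    case 4
    have "{4 * l - 1, 4 * l + 1} \<subset> {1..4 * l + 1}" using assms(1) by (intro proper) auto
    then show ?thesis using 4 by simp
  qed
qed

lemma cover_weight_I6_cover:
  assumes "2 \<le> l" "i \<in> {1..4 * l + 1}"
  shows "1 \<le> cover_weight (I6_cover l) i"
proof -
  have nonneg: "0 \<le> cover_weight low_blocks i" "0 \<le> cover_weight (middle_blocks l) i"
    "0 \<le> cover_weight (top_blocks l) i"
    by (auto simp: low_blocks_def middle_blocks_def top_blocks_def intro!: cover_weight_nonneg)
  consider "i \<le> 6" | "7 \<le> i" "i \<le> 4 * l - 2" | "4 * l - 1 \<le> i" by linarith
  then have "1 \<le> cover_weight low_blocks i \<or> 1 \<le> cover_weight (middle_blocks l) i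
      \<or> 1 \<le> cover_weight (top_blocks l) i"
  proof cases
    case 1
    then have "i \<in> {1, 2, 3, 4, 5, 6}" using assms(2) by auto
    then show ?thesis by (auto simp: low_blocks_def pair_users_def)
  next
    case 2
    define j where "j = (i + 1) div 4"
    have "2 \<le> j" "j < l" using 2 unfolding j_def by presburger+
    moreover have "i \<in> pair_users (2 * j) (2 * j + 1)"
      unfolding pair_users_def j_def by simp presburger
    ultimately have "1 \<le> cover_weight (middle_blocks l) i"
      unfolding middle_blocks_def by (intro cover_weight_ge_member) auto
    then show ?thesis by blast
  next
    case 3
    then have "i \<in> {4 * l - 1, 4 * l, 4 * l + 1}" using assms(2) by auto
    then show ?thesis using assms(1) by (auto simp: top_blocks_def)
  qed
  moreover have "cover_weight (I6_cover l) i
      = cover_weight low_blocks i + cover_weight (middle_blocks l) i + cover_weight (top_blocks l) i"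
    by (simp add: I6_cover_def)
  ultimately show ?thesis using nonneg by linarith
qed

lemma fractional_cover_I6_cover:
  assumes "2 \<le> l"
  shows "fractional_cover {1..4 * l + 1} (I6_cover l)"
  using I6_cover_member[OF assms] cover_weight_I6_cover[OF assms]
  unfolding fractional_cover_def by blast

lemma cover_cost_I6_cover_le:
  assumes "2 \<le> l"
  shows "cover_cost (I6 l) (4 * l) (I6_cover l) i \<le> 3 * real l + 1 / 2"
proof -
  have fuel: "4 * l = Suc (4 * l - 1)" using assms by simp
  have pair: "betaR_aux (I6 l) (4 * l) (pair_users a b) \<le> 3"
    if "a \<noteq> b" "a \<in> {1..2 * l}" "b \<in> {1..2 * l}" for a b
    using betaR_aux_pair_users_le[OF that] by (subst fuel)
  have top: "betaR_aux (I6 l) (4 * l) {4 * l - 1, 4 * l + 1} \<le> 1"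
    using assms by (subst fuel, intro betaR_aux_odd_top_le) presburger+
  have "cover_cost (I6 l) (4 * l) low_blocks i \<le> 3 * (\<Sum>(N, \<gamma>)\<leftarrow>low_blocks. \<gamma>)"
  proof (rule cover_cost_le_weight_sum)
    fix N \<gamma> assume "(N, \<gamma>) \<in> set low_blocks"
    then show "0 \<le> \<gamma> \<and> betaR_aux (I6 l) (4 * l) N \<le> 3" using pair assms by (auto simp: low_blocks_def)
  qed
  moreover have "cover_cost (I6 l) (4 * l) (middle_blocks l) i \<le> 3 * (\<Sum>(N, \<gamma>)\<leftarrow>middle_blocks l. \<gamma>)"
  proof (rule cover_cost_le_weight_sum)
    fix N \<gamma> assume "(N, \<gamma>) \<in> set (middle_blocks l)"
    then show "0 \<le> \<gamma> \<and> betaR_aux (I6 l) (4 * l) N \<le> 3" using pair by (auto simp: middle_blocks_def)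
  qed
  moreover have "cover_cost (I6 l) (4 * l) (top_blocks l) i \<le> 1 * (\<Sum>(N, \<gamma>)\<leftarrow>top_blocks l. \<gamma>)"
  proof (rule cover_cost_le_weight_sum)
    fix N \<gamma> assume "(N, \<gamma>) \<in> set (top_blocks l)"
    then show "0 \<le> \<gamma> \<and> betaR_aux (I6 l) (4 * l) N \<le> 1" using top by (auto simp: top_blocks_def)
  qed
  moreover have "(\<Sum>(N, \<gamma>)\<leftarrow>middle_blocks l. \<gamma>) = real l - 2"
    using assms by (simp add: middle_blocks_def comp_def sum_list_triv of_nat_diff)
  ultimately show ?thesis
    unfolding I6_cover_def cover_cost_append by (simp add: low_blocks_def top_blocks_def)
qed

(* For l = 1: every member has value 1, the weights sum to 4, and every user knows a member of
   weight at least 1/2. *)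
definition I6_cover_one :: "(nat set \<times> real) list" where
  "I6_cover_one = [({1}, 1 / 2), ({2}, 1), ({3}, 1 / 2), ({4}, 1), ({1, 5}, 1 / 2), ({3, 5}, 1 / 2)]"

lemma users_one: "{1..4 * 1 + 1} = {1, 2, 3, 4, 5 :: nat}"
  by (simp add: numeral_eq_Suc atLeastAtMostSuc_conv insert_commute)

lemma fractional_cover_I6_cover_one: "fractional_cover {1..4 * 1 + 1} I6_cover_one"
  unfolding users_one fractional_cover_def
proof
  have proper: "N \<subset> {1, 2, 3, 4, 5}" if "N \<subseteq> {1, 2, 3, 4, 5}" "card N \<le> 2" for N :: "nat set"
  proof
    show "N \<noteq> {1, 2, 3, 4, 5}" using that(2) by auto
  qed (rule that(1))
  then show "\<forall>(N, \<gamma>)\<in>set I6_cover_one. N \<noteq> {} \<and> N \<subset> {1, 2, 3, 4, 5} \<and> 0 \<le> \<gamma> \<and> \<gamma> \<le> 1"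
    unfolding I6_cover_one_def by simp
  show "\<forall>i\<in>{1, 2, 3, 4, 5}. 1 \<le> cover_weight I6_cover_one i"
    unfolding I6_cover_one_def by (simp add: cover_weight_def)
qed

lemma cover_cost_I6_cover_one_le:
  assumes "i \<in> {1..4 * 1 + 1}"
  shows "cover_cost (I6 1) 4 I6_cover_one i \<le> 7 / 2"
proof -
  have "betaR_aux (I6 1) 4 {1, 5} \<le> 1" "betaR_aux (I6 1) 4 {3, 5} \<le> 1"
    using betaR_aux_odd_top_le[of 1 1 3] betaR_aux_odd_top_le[of 3 1 3] by simp_all
  then have member: "0 \<le> \<gamma> \<and> betaR_aux (I6 1) 4 N \<le> 1" if "(N, \<gamma>) \<in> set I6_cover_one" for N \<gamma>
    using that unfolding I6_cover_one_def by (simp, elim disjE) simp_all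
  obtain N\<^sub>0 \<gamma>\<^sub>0 where "(N\<^sub>0, \<gamma>\<^sub>0) \<in> set I6_cover_one" "N\<^sub>0 \<subseteq> I6 1 i" "1 / 2 \<le> \<gamma>\<^sub>0"
  proof -
    from assms consider "i = 1" | "i = 2" | "i = 3" | "i = 4" | "i = 5"
      unfolding users_one by blast
    then show ?thesis
    proof cases
      case 1
      have sub: "{4} \<subseteq> I6 1 i" using I6_odd[of 1 1] by (simp add: 1)
      show ?thesis by (rule that[of "{4}" 1, OF _ sub]) (simp_all add: I6_cover_one_def)
    next
      case 2
      have sub: "{1} \<subseteq> I6 1 i" by (simp add: 2 I6_even)
      show ?thesis by (rule that[of "{1}" "1 / 2", OF _ sub]) (simp_all add: I6_cover_one_def)
    next
      case 3
      have sub: "{2} \<subseteq> I6 1 i" using I6_odd[of 3 1] by (simp add: 3)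
      show ?thesis by (rule that[of "{2}" 1, OF _ sub]) (simp_all add: I6_cover_one_def)
    next
      case 4
      have sub: "{3} \<subseteq> I6 1 i" by (simp add: 4 I6_even)
      show ?thesis by (rule that[of "{3}" "1 / 2", OF _ sub]) (simp_all add: I6_cover_one_def)
    next
      case 5
      have sub: "{1} \<subseteq> I6 1 i" using I6_top[of 1] by (simp add: 5)
      show ?thesis by (rule that[of "{1}" "1 / 2", OF _ sub]) (simp_all add: I6_cover_one_def)
    qed
  qed
  then have "cover_cost (I6 1) 4 I6_cover_one i \<le> 1 * ((\<Sum>(N, \<gamma>)\<leftarrow>I6_cover_one. \<gamma>) - \<gamma>\<^sub>0)"
    using member by (intro cover_cost_le_weight_sum_saving) auto
  then show ?thesis using \<open>1 / 2 \<le> \<gamma>\<^sub>0\<close> by (simp add: I6_cover_one_def)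
qed
lemma betaR_I6_upper_bound:
  assumes "1 \<le> l"
  shows "betaR (I6 l) {1..4 * l + 1} \<le> 3 * real l + 1 / 2"
proof (cases "l = 1")
  case True
  have "betaR_aux (I6 1) (Suc 4) {1..4 * 1 + 1} \<le> 7 / 2"
    by (rule betaR_aux_le_cover_cost[OF _ _ fractional_cover_I6_cover_one cover_cost_I6_cover_one_le])
      simp_all
  moreover have "card {1..4 * 1 + 1 :: nat} = Suc 4" by simp
  ultimately show ?thesis unfolding True betaR_def by simp
next
  case False
  then have "2 \<le> l" using assms by simp
  then have "betaR_aux (I6 l) (Suc (4 * l)) {1..4 * l + 1} \<le> 3 * real l + 1 / 2"
    by (intro betaR_aux_le_cover_cost[OF _ _ fractional_cover_I6_cover cover_cost_I6_cover_le]) auto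
  then show ?thesis by (simp add: betaR_def)
qed

section \<open>UMCD on I6\<close>

(* The row that UMCD adds when it serves the even user 2k, whose side information is 2k - 1. *)
definition pair_row :: "nat \<Rightarrow> nat set" where
  "pair_row k = {2 * k - 1, 2 * k}"

(* For odd i, the unique element of pair_row k that lies in B_set (4l + 1) (I6 l) i. *)
definition row_rep :: "nat \<Rightarrow> nat \<Rightarrow> nat \<Rightarrow> nat" where
  "row_rep l i k = (if i = 4 * l + 1 \<or> i = 2 * k - 1 then 2 * k else 2 * k - 1)"

lemma B_set_I6_top: "B_set (4 * l + 1) (I6 l) (4 * l + 1) = (\<lambda>k. 2 * k) ` {1..2 * l}"
proof -
  have "c \<in> B_set (4 * l + 1) (I6 l) (4 * l + 1) \<longleftrightarrow> c \<in> (\<lambda>k. 2 * k) ` {1..2 * l}" for c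
  proof
    assume "c \<in> B_set (4 * l + 1) (I6 l) (4 * l + 1)"
    then have "c \<in> {1..4 * l + 1}" "c \<noteq> 4 * l + 1" "\<not> (odd c \<and> c < 4 * l)"
      unfolding B_set_def I6_top by auto
    then have "c \<in> {1..4 * l}" "even c" unfolding atLeastAtMost_iff by presburger+
    then show "c \<in> (\<lambda>k. 2 * k) ` {1..2 * l}" by (auto intro!: image_eqI[of _ _ "c div 2"])
  qed (unfold B_set_def I6_top, auto, presburger)
  then show ?thesis by blast
qed

lemma B_set_I6_odd_not_top:
  assumes "odd i" "i \<in> {1..4 * l + 1}" "i \<noteq> 4 * l + 1"
  shows "B_set (4 * l + 1) (I6 l) i = row_rep l i ` {1..2 * l}"
proof -
  have A: "I6 l i = {y. even y \<and> 0 < y \<and> y \<le> 4 * l \<and> y \<noteq> i + 1} \<union> {4 * l + 1}"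
    using I6_odd[OF assms(1,3)] .
  have "c \<in> B_set (4 * l + 1) (I6 l) i \<longleftrightarrow> c \<in> row_rep l i ` {1..2 * l}" for c
  proof
    assume "c \<in> B_set (4 * l + 1) (I6 l) i"
    then have c: "c \<in> {1..4 * l}" "odd c \<or> c = i + 1" "c \<noteq> i"
      unfolding B_set_def A by auto
    have "c = row_rep l i ((c + 1) div 2)" "(c + 1) div 2 \<in> {1..2 * l}" if "odd c"
      using that c assms(3) unfolding row_rep_def by auto presburger+
    moreover have "c = row_rep l i ((i + 1) div 2)" "(i + 1) div 2 \<in> {1..2 * l}" if "even c"
      using that c assms unfolding row_rep_def by auto
    ultimately show "c \<in> row_rep l i ` {1..2 * l}" by blast
  next
    assume "c \<in> row_rep l i ` {1..2 * l}"
    then obtain k where "k \<in> {1..2 * l}" "c = row_rep l i k" by blast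
    then show "c \<in> B_set (4 * l + 1) (I6 l) i"
      using assms unfolding B_set_def A row_rep_def by auto
  qed
  then show ?thesis by blast
qed

lemma B_set_I6_odd:
  assumes "odd i" "i \<in> {1..4 * l + 1}"
  shows "B_set (4 * l + 1) (I6 l) i = row_rep l i ` {1..2 * l}"
proof (cases "i = 4 * l + 1")
  case True
  then show ?thesis unfolding True B_set_I6_top by (auto simp: row_rep_def)
qed (rule B_set_I6_odd_not_top[OF assms])

lemma row_rep_mem_pair_row: "row_rep l i k \<in> pair_row k"
  by (simp add: row_rep_def pair_row_def)

lemma inj_on_row_rep: "inj_on (row_rep l i) {1..2 * l}"
proof (rule inj_onI)
  fix k k' assume "k \<in> {1..2 * l}" "k' \<in> {1..2 * l}" "row_rep l i k = row_rep l i k'"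
  then show "k = k'" unfolding row_rep_def by (auto split: if_splits)
qed

lemma card_B_set_I6_odd:
  assumes "odd i" "i \<in> {1..4 * l + 1}"
  shows "card (B_set (4 * l + 1) (I6 l) i) \<le> 2 * l"
  unfolding B_set_I6_odd[OF assms] using card_image_le[of "{1..2 * l}" "row_rep l i"] by simp

lemma length_le_mcm_B_set_I6_odd:
  assumes "odd i" "i \<in> {1..4 * l + 1}" "distinct ks" "set ks \<subseteq> {1..2 * l}"
  shows "length ks \<le> mcm (map pair_row ks @ X) (B_set (4 * l + 1) (I6 l) i)"
proof (rule length_le_mcm_transversal[OF assms(3,4) inj_on_row_rep])
  show "row_rep l i k \<in> B_set (4 * l + 1) (I6 l) i \<inter> pair_row k" if "k \<in> {1..2 * l}" for k
    using that row_rep_mem_pair_row unfolding B_set_I6_odd[OF assms(1,2)] by simp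
qed simp

lemma not_decodable_before_odd_pick:
  assumes "distinct ks" "set ks \<subseteq> {1..2 * l}" "i \<in> {1..4 * l + 1}" "i \<notin> (\<lambda>k. 2 * k) ` set ks"
  shows "\<not> decodable (4 * l + 1) (I6 l) (map pair_row ks) i"
proof (cases "even i")
  case True
  have "i \<notin> map pair_row ks ! r" if "r < length (map pair_row ks)" for r
  proof
    assume "i \<in> map pair_row ks ! r"
    then have "i = 2 * ks ! r - 1 \<or> i = 2 * ks ! r" using that by (simp add: pair_row_def)
    moreover have "ks ! r \<in> set ks" "1 \<le> ks ! r" using that assms(2) nth_mem by fastforce+
    ultimately show False using True assms(4) by (auto; presburger)
  qed
  then have "mcm (map pair_row ks) (insert i (B_set (4 * l + 1) (I6 l) i))
      = mcm (map pair_row ks) (B_set (4 * l + 1) (I6 l) i)"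
    by (rule mcm_insert_unused_column)
  then show ?thesis by (simp add: decodable_def)
next
  case False
  have "length ks \<le> mcm (map pair_row ks @ []) (B_set (4 * l + 1) (I6 l) i)"
    by (rule length_le_mcm_B_set_I6_odd[OF False assms(3,1,2)])
  moreover have "mcm (map pair_row ks) ({i} \<union> B_set (4 * l + 1) (I6 l) i) \<le> length ks"
    using mcm_le_length[of "{i} \<union> B_set (4 * l + 1) (I6 l) i" "map pair_row ks"] by simp
  ultimately show ?thesis by (simp add: decodable_def)
qed

lemma I6_odd_unknown_not_top:
  assumes "odd i" "odd w" "i \<noteq> w" "i \<in> {1..4 * l + 1}" "i \<notin> I6 l w"
  shows "i \<noteq> 4 * l + 1" "w \<noteq> 4 * l + 1"
proof -
  show "i \<noteq> 4 * l + 1"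
  proof
    assume "i = 4 * l + 1"
    then show False using assms(2,3,5) by (simp add: I6_odd)
  qed
  show "w \<noteq> 4 * l + 1"
  proof
    assume "w = 4 * l + 1"
    moreover have "i < 4 * l" using assms(1,3,4) \<open>w = 4 * l + 1\<close> by auto presburger
    ultimately show False using assms(1,5) unfolding \<open>w = 4 * l + 1\<close> I6_top by simp
  qed
qed

lemma mcm_after_odd_pick_ge:
  assumes "distinct ks" "set ks = {1..2 * l}" "odd w" "odd i" "i \<noteq> w"
    "w \<in> {1..4 * l + 1}" "i \<in> {1..4 * l + 1}"
  defines "G \<equiv> map pair_row ks" and "B \<equiv> B_set (4 * l + 1) (I6 l) i"
  shows "2 * l + 1 \<le> mcm (G @ [insert w (I6 l w)]) ({i} \<union> B)"
proof -
  let ?R = "insert w (I6 l w)"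
  have len: "length ks = 2 * l" using assms(1,2) distinct_card by fastforce
  show ?thesis
  proof (cases "i \<in> I6 l w")
    case True
    have "i \<notin> B" by (simp add: B_def B_set_def)
    then have "({i} \<union> B) - {i} = B" by blast
    moreover have "2 * l \<le> mcm (G @ []) B"
      using length_le_mcm_B_set_I6_odd[OF assms(4,7,1), where X = "[]"] assms(2) len
      by (simp add: G_def B_def)
    ultimately show ?thesis
      using mcm_append_row[of "{i} \<union> B" i ?R G] True by (simp add: B_def)
  next
    case False
    \<comment> \<open>Then w knows i + 1, and the old rows are matched to their odd users instead.\<close>
    note not_top = I6_odd_unknown_not_top[OF assms(4,3,5,7) False]
    have "i + 1 \<in> I6 l w" using assms(3-7) not_top by (auto simp: I6_odd)
    moreover have "i + 1 \<in> B"
      using assms(4,7) not_top by (auto simp: B_def B_set_def I6_odd)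
    moreover have "length ks \<le> mcm (G @ []) (({i} \<union> B) - {i + 1})"
    proof (unfold G_def, rule length_le_mcm_transversal[OF assms(1), where f = "\<lambda>k. 2 * k - 1"])
      show "inj_on (\<lambda>k. 2 * k - 1) {1..2 * l}" by (rule inj_onI) auto
      show "2 * k - 1 \<in> (({i} \<union> B) - {i + 1}) \<inter> pair_row k" if "k \<in> {1..2 * l}" for k
      proof -
        have "2 * k - 1 = i \<or> 2 * k - 1 = row_rep l i k" using not_top by (simp add: row_rep_def)
        moreover have "row_rep l i k \<in> B"
          using that unfolding B_def B_set_I6_odd[OF assms(4,7)] by blast
        moreover have "2 * k - 1 \<noteq> i + 1" using assms(4) by presburger
        ultimately show ?thesis by (auto simp: pair_row_def)
      qed
    qed (simp_all add: assms(2) B_def)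
    ultimately show ?thesis
      using mcm_append_row[of "{i} \<union> B" "i + 1" ?R G] len by (simp add: B_def)
  qed
qed

lemma decodable_after_odd_pick:
  assumes "distinct ks" "set ks = {1..2 * l}" "odd w" "odd i" "i \<noteq> w"
    "w \<in> {1..4 * l + 1}" "i \<in> {1..4 * l + 1}"
  shows "decodable (4 * l + 1) (I6 l) (map pair_row ks @ [insert w (I6 l w)]) i"
proof -
  define G where "G = map pair_row ks @ [insert w (I6 l w)]"
  define B where "B = B_set (4 * l + 1) (I6 l) i"
  have len: "length ks = 2 * l" using assms(1,2) distinct_card by fastforce
  have "2 * l \<le> mcm G B"
    using length_le_mcm_B_set_I6_odd[OF assms(4,7,1)] assms(2) len by (simp add: G_def B_def)
  moreover have "mcm G B \<le> card B" by (rule mcm_le_card) (simp add: B_def)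
  moreover have "card B \<le> 2 * l" using card_B_set_I6_odd[OF assms(4,7)] by (simp add: B_def)
  moreover have "mcm G ({i} \<union> B) \<le> 2 * l + 1"
    using mcm_le_length[of "{i} \<union> B" G] len by (simp add: G_def B_def)
  moreover have "2 * l + 1 \<le> mcm G ({i} \<union> B)"
    unfolding G_def B_def by (rule mcm_after_odd_pick_ge[OF assms(1-7)])
  ultimately show ?thesis unfolding decodable_def G_def B_def by linarith
qed

(* The state of UMCD after serving the even users 2k for k in ks, in this order. *)
definition umcd_state :: "nat \<Rightarrow> nat list \<Rightarrow> nat set \<times> nat set list" where
  "umcd_state l ks = ({1..4 * l + 1} - (\<lambda>k. 2 * k) ` set ks, map pair_row ks)"

lemma one_in_umcd_state: "1 \<in> fst (umcd_state l ks)"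
  by (auto simp: umcd_state_def)

lemma umcd_step_picks_even:
  assumes "1 \<le> l" "distinct ks" "set ks \<subseteq> {1..2 * l}" "length ks < 2 * l"
    and step: "umcd_step (4 * l + 1) (I6 l) (umcd_state l ks) s'"
  shows "\<exists>k \<in> {1..2 * l} - set ks. s' = umcd_state l (ks @ [k])"
proof -
  define N where "N = {1..4 * l + 1} - (\<lambda>k. 2 * k) ` set ks"
  obtain w where w: "w \<in> N" "\<forall>v\<in>N. card (I6 l w) \<le> card (I6 l v)"
    and s': "s' = (N - {w} - {i \<in> N - {w}.
        decodable (4 * l + 1) (I6 l) (map pair_row ks @ [insert w (I6 l w)]) i},
      map pair_row ks @ [insert w (I6 l w)])"
    using step unfolding umcd_state_def umcd_step_iff N_def by blast
  have "card (set ks) < card {1..2 * l}" using assms(2,4) by (simp add: distinct_card)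
  then obtain k\<^sub>0 where "k\<^sub>0 \<in> {1..2 * l}" "k\<^sub>0 \<notin> set ks"
    using card_mono[of "set ks" "{1..2 * l}"] by fastforce
  then have "2 * k\<^sub>0 \<in> N" by (auto simp: N_def)
  then have "card (I6 l w) \<le> 1" using w(2) by (force simp: I6_even)
  then have "even w" using card_I6_odd_ge_2[OF assms(1)] w(1) by (force simp: N_def)
  define k where "k = w div 2"
  have w_eq: "w = 2 * k" using \<open>even w\<close> by (simp add: k_def)
  have k: "k \<in> {1..2 * l} - set ks" using w(1) by (auto simp: N_def w_eq)
  have row: "insert w (I6 l w) = pair_row k"
    using \<open>even w\<close> by (auto simp: I6_even pair_row_def w_eq)
  have N': "N - {w} = {1..4 * l + 1} - (\<lambda>k. 2 * k) ` set (ks @ [k])"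
    by (auto simp: N_def w_eq)
  have "\<not> decodable (4 * l + 1) (I6 l) (map pair_row (ks @ [k])) i" if "i \<in> N - {w}" for i
    using that k assms(2,3) unfolding N' by (intro not_decodable_before_odd_pick) auto
  then have "s' = umcd_state l (ks @ [k])"
    unfolding s' row umcd_state_def N' by auto
  then show ?thesis using k by blast
qed

lemma umcd_step_picks_odd:
  assumes "distinct ks" "set ks = {1..2 * l}"
    and step: "umcd_step (4 * l + 1) (I6 l) (umcd_state l ks) s'"
  shows "\<exists>G. s' = ({}, G) \<and> length G = 2 * l + 1"
proof -
  define N where "N = {1..4 * l + 1} - (\<lambda>k. 2 * k) ` set ks"
  obtain w where w: "w \<in> N"
    and s': "s' = (N - {w} - {i \<in> N - {w}.
        decodable (4 * l + 1) (I6 l) (map pair_row ks @ [insert w (I6 l w)]) i},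
      map pair_row ks @ [insert w (I6 l w)])"
    using step unfolding umcd_state_def umcd_step_iff N_def by blast
  have odd: "odd x" "x \<in> {1..4 * l + 1}" if "x \<in> N" for x
  proof -
    show "x \<in> {1..4 * l + 1}" using that by (simp add: N_def)
    show "odd x"
    proof
      assume "even x"
      then have "x \<in> (\<lambda>k. 2 * k) ` {1..2 * l}"
        using \<open>x \<in> {1..4 * l + 1}\<close> by (auto intro!: image_eqI[of _ _ "x div 2"])
      then show False using that assms(2) by (simp add: N_def)
    qed
  qed
  have "decodable (4 * l + 1) (I6 l) (map pair_row ks @ [insert w (I6 l w)]) i" if "i \<in> N - {w}" for i
    using that odd w decodable_after_odd_pick[OF assms(1,2)] by simp
  then have "s' = ({}, map pair_row ks @ [insert w (I6 l w)])" unfolding s' by blast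
  moreover have "length ks = 2 * l" using assms(1,2) distinct_card by fastforce
  ultimately show ?thesis by simp
qed

definition umcd_invariant :: "nat \<Rightarrow> nat set \<times> nat set list \<Rightarrow> bool" where
  "umcd_invariant l s \<longleftrightarrow>
     (\<exists>ks. distinct ks \<and> set ks \<subseteq> {1..2 * l} \<and> s = umcd_state l ks)
   \<or> (\<exists>G. s = ({}, G) \<and> length G = 2 * l + 1)"

lemma umcd_invariant_step:
  assumes "1 \<le> l" "umcd_invariant l s" "umcd_step (4 * l + 1) (I6 l) s s'"
  shows "umcd_invariant l s'"
proof -
  from assms(2) consider
      ks where "distinct ks" "set ks \<subseteq> {1..2 * l}" "s = umcd_state l ks"
    | G where "s = ({}, G)"
    unfolding umcd_invariant_def by blast
  then show ?thesis
  proof cases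
    case (1 ks)
    from distinct_subset_interval_cases[OF 1(1,2)] show ?thesis
    proof
      assume "length ks < 2 * l"
      then obtain k where "k \<in> {1..2 * l} - set ks" "s' = umcd_state l (ks @ [k])"
        using umcd_step_picks_even[OF assms(1) 1(1,2)] assms(3) 1(3) by blast
      then show ?thesis
        unfolding umcd_invariant_def using 1(1,2) by (intro disjI1 exI[of _ "ks @ [k]"]) auto
    next
      assume "set ks = {1..2 * l}"
      then show ?thesis
        unfolding umcd_invariant_def using umcd_step_picks_odd[OF 1(1)] assms(3) 1(3) by blast
    qed
  next
    case 2
    then show ?thesis using assms(3) by (simp add: umcd_step_iff)
  qed
qed

lemma umcd_run_I6_length:
  assumes "1 \<le> l" "umcd_run (4 * l + 1) (I6 l) G"
  shows "length G = 2 * l + 1"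
proof -
  have "umcd_invariant l ({1..4 * l + 1}, [])"
    unfolding umcd_invariant_def by (intro disjI1 exI[of _ "[]"]) (simp add: umcd_state_def)
  with assms(2) have "umcd_invariant l ({}, G)"
    unfolding umcd_run_def
    by (induction rule: rtranclp_induct) (auto intro: umcd_invariant_step[OF assms(1)])
  moreover have "({}, G) \<noteq> umcd_state l ks" for ks
    using one_in_umcd_state[of l ks] by (metis empty_iff fst_conv)
  ultimately show ?thesis unfolding umcd_invariant_def by auto
qed

lemma umcd_run_I6_exists:
  assumes "1 \<le> l"
  shows "\<exists>G. umcd_run (4 * l + 1) (I6 l) G"
proof -
  have "\<exists>G. (umcd_step (4 * l + 1) (I6 l))\<^sup>*\<^sup>* (umcd_state l ks) ({}, G)"
    if "distinct ks" "set ks \<subseteq> {1..2 * l}" for ks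
    using that
  proof (induction "2 * l - length ks" arbitrary: ks rule: less_induct)
    case less
    obtain s' where step: "umcd_step (4 * l + 1) (I6 l) (umcd_state l ks) s'"
      using umcd_step_exists[OF one_in_umcd_state] by blast
    from distinct_subset_interval_cases[OF less.prems] show ?case
    proof
      assume "length ks < 2 * l"
      then obtain k where k: "k \<in> {1..2 * l} - set ks" "s' = umcd_state l (ks @ [k])"
        using umcd_step_picks_even[OF assms less.prems _ step] by blast
      have "\<exists>G. (umcd_step (4 * l + 1) (I6 l))\<^sup>*\<^sup>* s' ({}, G)"
        unfolding k(2) using k(1) less.prems \<open>length ks < 2 * l\<close> by (intro less.hyps) auto
      then show ?thesis using step by (meson converse_rtranclp_into_rtranclp)
    next
      assume "set ks = {1..2 * l}"
      then show ?thesis using umcd_step_picks_odd[OF less.prems(1) _ step] step by blast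
    qed
  qed
  from this[of "[]"] show ?thesis by (simp add: umcd_run_def umcd_state_def)
qed

theorem theorem4:
  fixes l :: nat
  assumes "l \<ge> 1"
  shows "(\<exists>G. umcd_run (4 * l + 1) (I6 l) G) \<and>
         (\<forall>G. umcd_run (4 * l + 1) (I6 l) G \<longrightarrow>
              betaR (I6 l) {1..4 * l + 1} - real (length G) = real l - 1 / 2)"
proof (intro conjI allI impI)
  show "\<exists>G. umcd_run (4 * l + 1) (I6 l) G" by (rule umcd_run_I6_exists[OF assms])
  fix G assume "umcd_run (4 * l + 1) (I6 l) G"
  then have "length G = 2 * l + 1" by (rule umcd_run_I6_length[OF assms])
  moreover have "betaR (I6 l) {1..4 * l + 1} = 3 * real l + 1 / 2"
    using betaR_I6_lower_bound betaR_I6_upper_bound[OF assms] by (rule antisym[rotated])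
  ultimately show "betaR (I6 l) {1..4 * l + 1} - real (length G) = real l - 1 / 2" by simp
qed

end
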